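(* Let $M=N=2$, let $\lambda_1,\lambda_2>0$ with $\lambda_1+\lambda_2<1$, let $\beta_1>\beta_2>0$, and let $D_1(\gamma)=D_2(\gamma)=1/(1-\gamma)$ for $\gamma\in[0,1)$ (two identical $M/M/1$ queues of unit service rate). Writing $p_1=p_{11}$, $p_2=p_{21}$, $\gamma_1=\lambda_1p_1+\lambda_2p_2$, $\gamma_2=\lambda_1(1-p_1)+\lambda_2(1-p_2)$, the function $U(p_1,p_2)=\beta_1\lambda_1\bigl(p_1D_1(\gamma_1)+(1-p_1)D_2(\gamma_2)\bigr)+\beta_2\lambda_2\bigl(p_2D_1(\gamma_1)+(1-p_2)D_2(\gamma_2)\bigr)$ is not convex on $[0,1]^2$. Consequently, the social cost minimization problem $\min_P U(P)$ over right stochastic matrices is in general not a convex optimization problem.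
   Context: Here $p_{ij}$ is the probability that a class-$i$ customer (Poisson arrivals of rate $\lambda_i$, delay sensitivity $\beta_i$) is routed to queue $j$, and $D_j(\gamma)$ is the mean sojourn time at queue $j$ when its arrival rate is $\gamma$. *)

theory Defs
  imports "HOL-Analysis.Analysis"
begin

definition D :: "real \<Rightarrow> real" where
  "D g = 1 / (1 - g)"

definition U :: "real \<Rightarrow> real \<Rightarrow> real \<Rightarrow> real \<Rightarrow> real \<Rightarrow> real \<Rightarrow> real" where
  "U l1 l2 b1 b2 p1 p2 =
     (let g1 = l1 * p1 + l2 * p2;
          g2 = l1 * (1 - p1) + l2 * (1 - p2)
      in b1 * l1 * (p1 * D g1 + (1 - p1) * D g2)
       + b2 * l2 * (p2 * D g1 + (1 - p2) * D g2))"

end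

theory Submission
  imports Defs
begin

(*
  Write \<Lambda> = l1 + l2, K = b1 l1 + b2 l2 and s = 1 - \<Lambda>/2.  At the
  centre (1/2, 1/2) both queues carry load \<Lambda>/2 and U = K/s.  Moving to (1/2 + u1, 1/2 + u2)
  changes the load of queue 1 by x = l1 u1 + l2 u2 and its delay-weighted load by
  w = b1 l1 u1 + b2 l2 u2, while queue 2 absorbs the opposite changes, so
      U = (K/2 + w)/(s - x) + (K/2 - w)/(s + x).                       (centre form)
  Because b1 \<noteq> b2, the map (u1, u2) \<mapsto> (x, w) is invertible, so we may choose a short
  direction with w = -(K/s) x and x \<noteq> 0.  Along it U = K (s\<^sup>2 - 2x\<^sup>2) / (s (s\<^sup>2 - x\<^sup>2)),
  which is strictly below K/s on both sides of the centre.  A convex function cannot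
  exceed at a midpoint the values at both ends, so U is not convex on the unit square.
*)

text \<open>A convex function is bounded at the midpoint of two points by the average of its
  values there; hence a point strictly above both ends of a symmetric pair refutes convexity.\<close>
lemma not_convex_on_if_centre_above:
  fixes f :: "'a::real_vector \<Rightarrow> real"
  assumes "c + v \<in> S" and "c - v \<in> S"
      and "f (c + v) < f c" and "f (c - v) < f c"
  shows "\<not> convex_on S f"
proof
  assume "convex_on S f"
  then have "f ((1 - 1/2) *\<^sub>R (c + v) + (1/2) *\<^sub>R (c - v))
               \<le> (1 - 1/2) * f (c + v) + (1/2) * f (c - v)"
    using assms(1,2) by (intro convex_onD) auto
  moreover have "(1 - 1/2) *\<^sub>R (c + v) + (1/2 :: real) *\<^sub>R (c - v) = c"
    by (simp add: scaleR_add_right scaleR_diff_right flip: scaleR_add_left)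
  ultimately show False
    using assms(3,4) by simp
qed

lemma shifted_cost_below_balanced:
  fixes K s x :: real
  assumes "K > 0" and "x \<noteq> 0" and "\<bar>x\<bar> < s"
  shows "(K/2 - K/s * x) / (s - x) + (K/2 + K/s * x) / (s + x) < K / s"
proof -
  have s: "s > 0" and sx: "s - x > 0" "s + x > 0"
    using assms(3) by auto
  have closed_form: "(K/2 - K/s * x) / (s - x) + (K/2 + K/s * x) / (s + x)
                       = K * (s\<^sup>2 - 2 * x\<^sup>2) / (s * ((s - x) * (s + x)))"
    using s sx by (simp add: divide_simps) (simp add: algebra_simps power2_eq_square)
  have "0 < K * x\<^sup>2"
    using assms(1,2) by simp
  then have "K * (s\<^sup>2 - 2 * x\<^sup>2) < K * ((s - x) * (s + x))"
    by (simp add: algebra_simps power2_eq_square)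
  moreover have "(s - x) * (s + x) > 0"
    using sx by simp
  ultimately have "K * (s\<^sup>2 - 2 * x\<^sup>2) / (s * ((s - x) * (s + x)))
                     < K * ((s - x) * (s + x)) / (s * ((s - x) * (s + x)))"
    using s by (intro divide_strict_right_mono) simp_all
  also have "\<dots> = K / s"
    using sx by simp
  finally show ?thesis
    unfolding closed_form .
qed

lemma direction_with_prescribed_weight:
  fixes l1 l2 b1 b2 \<rho> :: real
  assumes "l1 > 0" and "l2 > 0" and "b1 \<noteq> b2"
  obtains u1 u2 where "\<bar>u1\<bar> \<le> 1/2" and "\<bar>u2\<bar> \<le> 1/2"
    and "l1 * u1 + l2 * u2 > 0"
    and "b1 * l1 * u1 + b2 * l2 * u2 = \<rho> * (l1 * u1 + l2 * u2)"
proof -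
  define \<alpha> where "\<alpha> = (\<rho> - b2) / ((b1 - b2) * l1)"
  define \<beta> where "\<beta> = (b1 - \<rho>) / ((b1 - b2) * l2)"
  have "b1 - b2 \<noteq> 0"
    using assms(3) by simp
  have scaled: "l1 * \<alpha> = (\<rho> - b2) / (b1 - b2)" "l2 * \<beta> = (b1 - \<rho>) / (b1 - b2)"
    using assms(1,2) by (simp_all add: \<alpha>_def \<beta>_def)
  have load: "l1 * \<alpha> + l2 * \<beta> = 1"
    using \<open>b1 - b2 \<noteq> 0\<close> unfolding scaled by (simp add: add_divide_distrib[symmetric])
  have "b1 * l1 * \<alpha> + b2 * l2 * \<beta> = (b1 * (\<rho> - b2) + b2 * (b1 - \<rho>)) / (b1 - b2)"
    by (simp add: mult.assoc scaled add_divide_distrib)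
  also have "\<dots> = \<rho> * (b1 - b2) / (b1 - b2)"
    by (simp add: algebra_simps)
  also have "\<dots> = \<rho>"
    using \<open>b1 - b2 \<noteq> 0\<close> by simp
  finally have weight: "b1 * l1 * \<alpha> + b2 * l2 * \<beta> = \<rho>" .
  have norm_pos: "\<bar>\<alpha>\<bar> + \<bar>\<beta>\<bar> > 0"
    using load by (cases "\<alpha> = 0"; cases "\<beta> = 0") auto
  define t where "t = 1 / (2 * (\<bar>\<alpha>\<bar> + \<bar>\<beta>\<bar>))"
  have t: "t > 0" "t * \<bar>\<alpha>\<bar> \<le> 1/2" "t * \<bar>\<beta>\<bar> \<le> 1/2"
    using norm_pos by (auto simp: t_def field_simps)
  show ?thesis
  proof
    show "\<bar>t * \<alpha>\<bar> \<le> 1/2" "\<bar>t * \<beta>\<bar> \<le> 1/2"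
      using t by (simp_all add: abs_mult)
    have "l1 * (t * \<alpha>) + l2 * (t * \<beta>) = t * (l1 * \<alpha> + l2 * \<beta>)"
      by (simp add: algebra_simps)
    then have load_t: "l1 * (t * \<alpha>) + l2 * (t * \<beta>) = t"
      using load by simp
    then show "l1 * (t * \<alpha>) + l2 * (t * \<beta>) > 0"
      using t by simp
    have "b1 * l1 * (t * \<alpha>) + b2 * l2 * (t * \<beta>) = t * (b1 * l1 * \<alpha> + b2 * l2 * \<beta>)"
      by (simp add: algebra_simps)
    then show "b1 * l1 * (t * \<alpha>) + b2 * l2 * (t * \<beta>) = \<rho> * (l1 * (t * \<alpha>) + l2 * (t * \<beta>))"
      unfolding load_t weight by simp
  qed
qed

definition weighted_rate :: "real \<Rightarrow> real \<Rightarrow> real \<Rightarrow> real \<Rightarrow> real" where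
  "weighted_rate l1 l2 b1 b2 = b1 * l1 + b2 * l2"

definition balanced_slack :: "real \<Rightarrow> real \<Rightarrow> real" where
  "balanced_slack l1 l2 = 1 - (l1 + l2)/2"

lemma U_centre_form:
  assumes "l1 * u1 + l2 * u2 = x" and "b1 * l1 * u1 + b2 * l2 * u2 = w"
  shows "U l1 l2 b1 b2 (1/2 + u1) (1/2 + u2) =
           (weighted_rate l1 l2 b1 b2 / 2 + w) / (balanced_slack l1 l2 - x)
         + (weighted_rate l1 l2 b1 b2 / 2 - w) / (balanced_slack l1 l2 + x)"
proof -
  have load_form: "U l1 l2 b1 b2 p1 p2 =
          (b1 * l1 * p1 + b2 * l2 * p2) / (1 - (l1 * p1 + l2 * p2))
        + (b1 * l1 * (1 - p1) + b2 * l2 * (1 - p2)) / (1 - (l1 * (1 - p1) + l2 * (1 - p2)))"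
    for p1 p2
  proof -
    have "U l1 l2 b1 b2 p1 p2 =
            (b1 * l1 * p1 + b2 * l2 * p2) * D (l1 * p1 + l2 * p2)
          + (b1 * l1 * (1 - p1) + b2 * l2 * (1 - p2)) * D (l1 * (1 - p1) + l2 * (1 - p2))"
      unfolding U_def Let_def by (simp add: algebra_simps)
    then show ?thesis
      by (simp add: D_def)
  qed
  have "1 - (l1 * (1/2 + u1) + l2 * (1/2 + u2)) = balanced_slack l1 l2 - x"
       "1 - (l1 * (1 - (1/2 + u1)) + l2 * (1 - (1/2 + u2))) = balanced_slack l1 l2 + x"
       "b1 * l1 * (1/2 + u1) + b2 * l2 * (1/2 + u2) = weighted_rate l1 l2 b1 b2 / 2 + w"
       "b1 * l1 * (1 - (1/2 + u1)) + b2 * l2 * (1 - (1/2 + u2))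
          = weighted_rate l1 l2 b1 b2 / 2 - w"
    unfolding assms[symmetric] weighted_rate_def balanced_slack_def
    by (simp_all add: algebra_simps)
  then show ?thesis
    unfolding load_form by (simp only:)
qed

lemma U_below_balanced:
  fixes l1 l2 b1 b2 u1 u2 :: real
  defines "K \<equiv> weighted_rate l1 l2 b1 b2" and "s \<equiv> balanced_slack l1 l2"
  assumes "K > 0"
      and weight: "b1 * l1 * u1 + b2 * l2 * u2 = - K/s * (l1 * u1 + l2 * u2)"
      and "l1 * u1 + l2 * u2 \<noteq> 0" and "\<bar>l1 * u1 + l2 * u2\<bar> < s"
  shows "U l1 l2 b1 b2 (1/2 + u1) (1/2 + u2) < U l1 l2 b1 b2 (1/2) (1/2)"
    and "U l1 l2 b1 b2 (1/2 - u1) (1/2 - u2) < U l1 l2 b1 b2 (1/2) (1/2)"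
proof -
  define x where "x = l1 * u1 + l2 * u2"
  have centre: "U l1 l2 b1 b2 (1/2) (1/2) = K / s"
    using U_centre_form[of l1 0 l2 0 0 b1 b2 0] by (simp add: K_def s_def)
  have "U l1 l2 b1 b2 (1/2 + u1) (1/2 + u2)
          = (K/2 - K/s * x) / (s - x) + (K/2 + K/s * x) / (s + x)"
    using U_centre_form[OF x_def[symmetric] weight[folded x_def]] by (simp add: K_def s_def)
  then show "U l1 l2 b1 b2 (1/2 + u1) (1/2 + u2) < U l1 l2 b1 b2 (1/2) (1/2)"
    using shifted_cost_below_balanced[of K x s] assms(3,5,6) by (simp add: centre x_def)
  have "l1 * - u1 + l2 * - u2 = - x" "b1 * l1 * - u1 + b2 * l2 * - u2 = - (- K/s * x)"
    using weight by (simp_all add: x_def)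
  from U_centre_form[OF this]
  have "U l1 l2 b1 b2 (1/2 - u1) (1/2 - u2)
          = (K/2 - K/s * - x) / (s - - x) + (K/2 + K/s * - x) / (s + - x)"
    by (simp add: K_def s_def)
  then show "U l1 l2 b1 b2 (1/2 - u1) (1/2 - u2) < U l1 l2 b1 b2 (1/2) (1/2)"
    using shifted_cost_below_balanced[of K "- x" s] assms(3,5,6) by (simp add: centre x_def)
qed

theorem mainTheorem3:
  fixes l1 l2 b1 b2 :: real
  assumes "l1 > 0" and "l2 > 0" and "l1 + l2 < 1"
      and "b1 > b2" and "b2 > 0"
  shows "\<not> convex_on ({0..1} \<times> {0..1}) (\<lambda>(p1, p2). U l1 l2 b1 b2 p1 p2)"
proof -
  define K where "K = weighted_rate l1 l2 b1 b2"
  define s where "s = balanced_slack l1 l2"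
  have "K > 0"
    using assms by (simp add: K_def weighted_rate_def add_pos_pos)
  obtain u1 u2 where u: "\<bar>u1\<bar> \<le> 1/2" "\<bar>u2\<bar> \<le> 1/2"
    and shift_pos: "l1 * u1 + l2 * u2 > 0"
    and weight: "b1 * l1 * u1 + b2 * l2 * u2 = - K/s * (l1 * u1 + l2 * u2)"
    using direction_with_prescribed_weight[of l1 l2 b1 b2 "- K/s"] assms by auto
  (* each class contributes at most half its rate to the shift, so it stays below s *)
  have "l1 * u1 \<le> l1/2" "l2 * u2 \<le> l2/2"
    using u assms(1,2) by (simp_all add: mult_left_le)
  then have admissible: "\<bar>l1 * u1 + l2 * u2\<bar> < s"
    using shift_pos assms(3) by (auto simp: s_def balanced_slack_def field_simps)
  have box: "(1/2, 1/2) + (u1, u2) \<in> {0..1} \<times> {0..1}"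
             "(1/2, 1/2) - (u1, u2) \<in> {0..1} \<times> {0..1}"
    using u by auto
  show ?thesis
    using U_below_balanced[of l1 l2 b1 b2 u1 u2, folded K_def s_def,
                           OF \<open>K > 0\<close> weight _ admissible] shift_pos
    by (intro not_convex_on_if_centre_above[OF box]) auto
qed

end
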